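(* Let $k\ge 0$ and $n>3k$ be integers. Then the set of maximal simplices of $\mathrm{VR}(T_{n,n};k)$ equals $M_{n,k}=\{\pi_n(\sigma):\sigma \text{ a maximal simplex of } \mathrm{VR}(\mathbb{Z}^2;k)\}$.
   Context: $\mathbb{Z}^2$ carries the $l^1$ metric. $T_{n,n}=\mathbb{Z}^2/(n\mathbb{Z}\times n\mathbb{Z})$ with quotient map $\pi_n$ (reduction mod $n$) and quotient metric $d([x],[y])=\min\{d(x',y'):\pi_n(x')=[x],\pi_n(y')=[y]\}$. $\mathrm{VR}(X;r)$ is the simplicial complex on $X$ whose simplices are the finite nonempty subsets of diameter at most $r$; a maximal simplex is one not properly contained in another. *)

theory Defs
  imports Main
begin

definition l1_dist :: "int \<times> int \<Rightarrow> int \<times> int \<Rightarrow> nat" where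
  "l1_dist x y = nat (\<bar>fst x - fst y\<bar> + \<bar>snd x - snd y\<bar>)"

text \<open>The torus T_{n,n} = Z^2/(nZ x nZ), represented by canonical residues.\<close>
definition torus :: "nat \<Rightarrow> (int \<times> int) set" where
  "torus n = {0..<int n} \<times> {0..<int n}"

definition proj :: "nat \<Rightarrow> int \<times> int \<Rightarrow> int \<times> int" where
  "proj n x = (fst x mod int n, snd x mod int n)"

definition torus_dist :: "nat \<Rightarrow> int \<times> int \<Rightarrow> int \<times> int \<Rightarrow> nat" where
  "torus_dist n p q =
     (LEAST d. \<exists>x' y'. proj n x' = p \<and> proj n y' = q \<and> l1_dist x' y' = d)"

definition vr_simplex :: "'a set \<Rightarrow> ('a \<Rightarrow> 'a \<Rightarrow> nat) \<Rightarrow> nat \<Rightarrow> 'a set \<Rightarrow> bool" where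
  "vr_simplex X d r \<sigma> \<longleftrightarrow>
     \<sigma> \<subseteq> X \<and> finite \<sigma> \<and> \<sigma> \<noteq> {} \<and> (\<forall>x\<in>\<sigma>. \<forall>y\<in>\<sigma>. d x y \<le> r)"

definition vr_maximal_simplex :: "'a set \<Rightarrow> ('a \<Rightarrow> 'a \<Rightarrow> nat) \<Rightarrow> nat \<Rightarrow> 'a set \<Rightarrow> bool" where
  "vr_maximal_simplex X d r \<sigma> \<longleftrightarrow>
     vr_simplex X d r \<sigma> \<and> \<not> (\<exists>\<tau>. vr_simplex X d r \<tau> \<and> \<sigma> \<subset> \<tau>)"

end

theory Submission
  imports Defs
begin

text \<open>
  Every simplex of \<open>VR(T\<^sub>n\<^sub>,\<^sub>n; k)\<close> lifts isometrically: fixing a lift \<open>x\<close> of one of its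
  vertices, the lifts lying within distance \<open>k\<close> of \<open>x\<close> form a simplex of \<open>VR(\<int>\<^sup>2; k)\<close>
  projecting onto it. Indeed two such lifts \<open>y, z\<close> are at distance at most \<open>2k\<close>, and a lift
  \<open>w\<close> of \<open>\<pi>\<^sub>n(z)\<close> realising the torus distance from \<open>y\<close> satisfies \<open>d(z, w) \<le> 3k < n\<close>,
  which forces \<open>w = z\<close>. Since projection never increases distances and every simplex of
  \<open>VR(\<int>\<^sup>2; k)\<close> lies in a maximal one (balls are finite), maximality transfers in both
  directions.
\<close>

lemma l1_dist_commute: "l1_dist x y = l1_dist y x"
  unfolding l1_dist_def by (simp add: abs_minus_commute)

lemma l1_dist_triangle: "l1_dist x z \<le> l1_dist x y + l1_dist y z"
  unfolding l1_dist_def by (simp add: nat_le_iff)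

lemma finite_l1_ball: "finite {y. l1_dist x y \<le> r}"
proof (rule finite_subset)
  show "{y. l1_dist x y \<le> r} \<subseteq>
      {fst x - int r..fst x + int r} \<times> {snd x - int r..snd x + int r}"
    unfolding l1_dist_def by (auto simp: nat_le_iff)
qed simp

lemma proj_eq_iff_dvd:
  "proj n a = proj n b \<longleftrightarrow> int n dvd fst a - fst b \<and> int n dvd snd a - snd b"
  unfolding proj_def by (simp add: mod_eq_dvd_iff)

lemma proj_torus_id: "p \<in> torus n \<Longrightarrow> proj n p = p"
  unfolding proj_def torus_def by (cases p) auto

lemma proj_in_torus: "n > 0 \<Longrightarrow> proj n x \<in> torus n"
  unfolding proj_def torus_def by auto

lemma eq_if_proj_eq_l1_dist_less:
  assumes "proj n a = proj n b" and "l1_dist a b < n"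
  shows "a = b"
proof -
  have "\<bar>fst a - fst b\<bar> < int n" and "\<bar>snd a - snd b\<bar> < int n"
    using assms(2) unfolding l1_dist_def by auto
  moreover have "int n dvd fst a - fst b" and "int n dvd snd a - snd b"
    using assms(1) by (simp_all add: proj_eq_iff_dvd)
  ultimately have "fst a - fst b = 0" and "snd a - snd b = 0"
    by (metis dvd_imp_le_int abs_of_nat not_le)+
  then show ?thesis by (simp add: prod_eq_iff)
qed

lemma torus_dist_le_l1_dist: "torus_dist n (proj n x) (proj n y) \<le> l1_dist x y"
  unfolding torus_dist_def by (rule Least_le) blast

lemma torus_dist_attained:
  "\<exists>w. proj n w = proj n z \<and> l1_dist y w = torus_dist n (proj n y) (proj n z)"
proof -
  obtain a b where ab: "proj n a = proj n y" "proj n b = proj n z"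
    "l1_dist a b = torus_dist n (proj n y) (proj n z)"
    using LeastI_ex[of "\<lambda>d. \<exists>x' y'. proj n x' = proj n y \<and> proj n y' = proj n z \<and> l1_dist x' y' = d"]
    unfolding torus_dist_def by blast
  define w where "w = (fst b + (fst y - fst a), snd b + (snd y - snd a))"
  have "int n dvd fst y - fst a" and "int n dvd snd y - snd a"
    using ab(1) by (simp_all add: proj_eq_iff_dvd dvd_diff_commute)
  then have "proj n w = proj n b"
    unfolding w_def proj_eq_iff_dvd by simp
  moreover have "l1_dist y w = l1_dist a b"
    unfolding w_def l1_dist_def by (simp add: abs_minus_commute)
  ultimately show ?thesis using ab(2,3) by metis
qed

lemma torus_dist_eq_l1_dist:
  assumes "l1_dist y z + torus_dist n (proj n y) (proj n z) < n"
  shows "torus_dist n (proj n y) (proj n z) = l1_dist y z"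
proof -
  obtain w where w: "proj n w = proj n z" "l1_dist y w = torus_dist n (proj n y) (proj n z)"
    using torus_dist_attained by blast
  have "l1_dist z w \<le> l1_dist z y + l1_dist y w" by (rule l1_dist_triangle)
  also have "\<dots> < n" using assms w(2) l1_dist_commute[of z y] by linarith
  finally have "z = w"
    using w(1) eq_if_proj_eq_l1_dist_less[of n z w] by simp
  with w(2) show ?thesis by metis
qed

lemma vr_maximal_simplexI:
  assumes "vr_simplex X d r \<sigma>" and "\<And>\<tau>. vr_simplex X d r \<tau> \<Longrightarrow> \<sigma> \<subseteq> \<tau> \<Longrightarrow> \<tau> = \<sigma>"
  shows "vr_maximal_simplex X d r \<sigma>"
  using assms unfolding vr_maximal_simplex_def by blast

lemma vr_maximal_simplexD:
  assumes "vr_maximal_simplex X d r \<sigma>"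
  shows "vr_simplex X d r \<sigma>"
    and "vr_simplex X d r \<tau> \<Longrightarrow> \<sigma> \<subseteq> \<tau> \<Longrightarrow> \<tau> = \<sigma>"
  using assms unfolding vr_maximal_simplex_def by blast+

lemma vr_simplex_extends_to_maximal:
  assumes finite_balls: "\<And>x. finite {y. d x y \<le> r}" and "vr_simplex X d r \<sigma>"
  shows "\<exists>\<tau>. \<sigma> \<subseteq> \<tau> \<and> vr_maximal_simplex X d r \<tau>"
proof -
  obtain x where "x \<in> \<sigma>" using assms(2) unfolding vr_simplex_def by blast
  define F where "F = {\<tau>. vr_simplex X d r \<tau> \<and> \<sigma> \<subseteq> \<tau>}"
  have "F \<subseteq> Pow {y. d x y \<le> r}"
    using \<open>x \<in> \<sigma>\<close> unfolding F_def vr_simplex_def by auto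
  then have "finite F"
    by (rule finite_subset) (simp add: finite_balls)
  moreover have "\<sigma> \<in> F" using assms(2) unfolding F_def by simp
  ultimately obtain \<tau> where "\<tau> \<in> F" "\<sigma> \<subseteq> \<tau>" and top: "\<forall>\<rho>\<in>F. \<tau> \<subseteq> \<rho> \<longrightarrow> \<tau> = \<rho>"
    using finite_has_maximal2[of F \<sigma>] by blast
  have "vr_maximal_simplex X d r \<tau>"
  proof (rule vr_maximal_simplexI)
    show "vr_simplex X d r \<tau>" using \<open>\<tau> \<in> F\<close> unfolding F_def by blast
    fix \<rho> assume "vr_simplex X d r \<rho>" and "\<tau> \<subseteq> \<rho>"
    with \<open>\<sigma> \<subseteq> \<tau>\<close> have "\<rho> \<in> F" unfolding F_def by blast
    with top \<open>\<tau> \<subseteq> \<rho>\<close> show "\<rho> = \<tau>" by blast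
  qed
  with \<open>\<sigma> \<subseteq> \<tau>\<close> show ?thesis by blast
qed

lemma vr_simplex_proj:
  assumes "n > 0" and "vr_simplex UNIV l1_dist r \<tau>"
  shows "vr_simplex (torus n) (torus_dist n) r (proj n ` \<tau>)"
  unfolding vr_simplex_def
proof (intro conjI ballI)
  show "proj n ` \<tau> \<subseteq> torus n" using proj_in_torus assms(1) by blast
  fix p q assume "p \<in> proj n ` \<tau>" "q \<in> proj n ` \<tau>"
  then obtain x y where "x \<in> \<tau>" "y \<in> \<tau>" "p = proj n x" "q = proj n y" by blast
  then show "torus_dist n p q \<le> r"
    using assms(2) torus_dist_le_l1_dist[of n x y] unfolding vr_simplex_def by fastforce
qed (use assms(2) in \<open>auto simp: vr_simplex_def\<close>)

definition lifts_near :: "nat \<Rightarrow> nat \<Rightarrow> (int \<times> int) set \<Rightarrow> int \<times> int \<Rightarrow> (int \<times> int) set" where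
  "lifts_near n r S x = {y. proj n y \<in> S \<and> l1_dist x y \<le> r}"

lemma subset_lifts_near:
  assumes "vr_simplex UNIV l1_dist r \<tau>" and "x \<in> \<tau>" and "proj n ` \<tau> \<subseteq> S"
  shows "\<tau> \<subseteq> lifts_near n r S x"
  using assms unfolding lifts_near_def vr_simplex_def by blast

lemma proj_lifts_near:
  assumes "vr_simplex (torus n) (torus_dist n) r S" and "proj n x \<in> S"
  shows "proj n ` lifts_near n r S x = S"
proof
  show "proj n ` lifts_near n r S x \<subseteq> S" unfolding lifts_near_def by auto
next
  show "S \<subseteq> proj n ` lifts_near n r S x"
  proof
    fix q assume "q \<in> S"
    with assms have q: "proj n q = q" and close: "torus_dist n (proj n x) q \<le> r"
      using proj_torus_id unfolding vr_simplex_def by blast+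
    obtain w where w: "proj n w = q" "l1_dist x w = torus_dist n (proj n x) q"
      using torus_dist_attained[of n q x] q by metis
    with close \<open>q \<in> S\<close> have "w \<in> lifts_near n r S x"
      unfolding lifts_near_def by simp
    with w(1) show "q \<in> proj n ` lifts_near n r S x" by blast
  qed
qed

lemma vr_simplex_lifts_near:
  assumes "n > 3 * r" and S: "vr_simplex (torus n) (torus_dist n) r S" and "proj n x \<in> S"
  shows "vr_simplex UNIV l1_dist r (lifts_near n r S x)"
proof -
  have "l1_dist y z \<le> r" if "y \<in> lifts_near n r S x" "z \<in> lifts_near n r S x" for y z
  proof -
    have y: "proj n y \<in> S" "l1_dist x y \<le> r" and z: "proj n z \<in> S" "l1_dist x z \<le> r"
      using that unfolding lifts_near_def by auto
    have "l1_dist y z \<le> l1_dist x y + l1_dist x z"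
      using l1_dist_triangle[of y z x] l1_dist_commute[of y x] by simp
    moreover have "torus_dist n (proj n y) (proj n z) \<le> r"
      using y z S unfolding vr_simplex_def by blast
    ultimately have "l1_dist y z + torus_dist n (proj n y) (proj n z) < n"
      using y z assms(1) by linarith
    from torus_dist_eq_l1_dist[OF this] show ?thesis
      using \<open>torus_dist n (proj n y) (proj n z) \<le> r\<close> by simp
  qed
  moreover have "finite (lifts_near n r S x)"
    by (rule finite_subset[OF _ finite_l1_ball]) (auto simp: lifts_near_def)
  moreover have "lifts_near n r S x \<noteq> {}"
    using proj_lifts_near[OF S assms(3)] S unfolding vr_simplex_def by blast
  ultimately show ?thesis unfolding vr_simplex_def by blast
qed

lemma maximal_torus_simplex_is_proj:
  assumes "n > 3 * r" and S_max: "vr_maximal_simplex (torus n) (torus_dist n) r S"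
  shows "\<exists>\<tau>. vr_maximal_simplex UNIV l1_dist r \<tau> \<and> S = proj n ` \<tau>"
proof -
  note S = vr_maximal_simplexD(1)[OF S_max]
  then obtain p where "p \<in> S" and "p \<in> torus n" unfolding vr_simplex_def by blast
  then have p: "proj n p \<in> S" by (simp add: proj_torus_id)
  obtain \<tau> where \<tau>: "lifts_near n r S p \<subseteq> \<tau>" "vr_maximal_simplex UNIV l1_dist r \<tau>"
    using vr_simplex_extends_to_maximal[OF finite_l1_ball vr_simplex_lifts_near[OF assms(1) S p]]
    by blast
  have "vr_simplex (torus n) (torus_dist n) r (proj n ` \<tau>)"
    using assms(1) by (simp add: vr_simplex_proj vr_maximal_simplexD(1)[OF \<tau>(2)])
  moreover have "S \<subseteq> proj n ` \<tau>"
    using image_mono[OF \<tau>(1), of "proj n"] proj_lifts_near[OF S p] by simp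
  ultimately have "proj n ` \<tau> = S" by (rule vr_maximal_simplexD(2)[OF S_max])
  with \<tau>(2) show ?thesis by blast
qed

lemma vr_maximal_simplex_proj:
  assumes "n > 3 * r" and \<tau>_max: "vr_maximal_simplex UNIV l1_dist r \<tau>"
  shows "vr_maximal_simplex (torus n) (torus_dist n) r (proj n ` \<tau>)"
proof (rule vr_maximal_simplexI)
  note \<tau> = vr_maximal_simplexD(1)[OF \<tau>_max]
  then show "vr_simplex (torus n) (torus_dist n) r (proj n ` \<tau>)"
    using assms(1) by (simp add: vr_simplex_proj)
  fix S assume S: "vr_simplex (torus n) (torus_dist n) r S" and "proj n ` \<tau> \<subseteq> S"
  obtain x where "x \<in> \<tau>" using \<tau> unfolding vr_simplex_def by blast
  with \<open>proj n ` \<tau> \<subseteq> S\<close> have x: "proj n x \<in> S" by blast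
  have "\<tau> \<subseteq> lifts_near n r S x"
    using subset_lifts_near[OF \<tau> \<open>x \<in> \<tau>\<close> \<open>proj n ` \<tau> \<subseteq> S\<close>] .
  then have "lifts_near n r S x = \<tau>"
    by (rule vr_maximal_simplexD(2)[OF \<tau>_max vr_simplex_lifts_near[OF assms(1) S x]])
  then show "S = proj n ` \<tau>"
    using proj_lifts_near[OF S x] by simp
qed

theorem lemma5p6:
  fixes n k :: nat
  assumes "n > 3 * k"
  shows "{\<sigma>. vr_maximal_simplex (torus n) (torus_dist n) k \<sigma>} =
         {proj n ` \<sigma> | \<sigma>. vr_maximal_simplex UNIV l1_dist k \<sigma>}"
  using maximal_torus_simplex_is_proj[OF assms] vr_maximal_simplex_proj[OF assms] by blast

end
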